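(* Consider a TBSC over a field $\mathbb F$ in which the SR link uses a point-to-point code with extended delay profile $(t_1,\dots,t_k)$ for combined symbols $(s_1[t]+m_1(t),\dots,s_k[t]+m_k(t))$, where each $m_i(t)$ is a fixed linear combination of source symbols $s_j[t']$ with $j\in[k]$, $t'<t$; the relay sends $R[t]$ with $r_i[t]=s_i[t-t_i]+m_i(t-t_i)$ (zero if $t-t_i<0$); and the RD link uses a point-to-point code with delay profile $(t'_1,\dots,t'_k)$ for $(r_1[t],\dots,r_k[t])$. If $t_i+t'_i\le T$ for all $i\in[k]$, then the destination recovers every source symbol $s_i[\tau]$ by time $\tau+T$.
   Context: Delay profile of a point-to-point code with messages $(x_1[t],\dots,x_k[t])$: a tuple $(d_1,\dots,d_k)$ such that for every admissible erasure pattern and all $t,i$, $x_i[t]$ is determined by the packets received at times $\le t+d_i$. Extended delay profile $(t_1,\dots,t_k)$ with combined symbols $x_i[t]+m_i(t)$: for every admissible erasure pattern and all $t,i$, $x_i[t]+m_i(t)$ is determined by the packets received at times $\le t+t_i$ (with $m_i(0)=0$). Admissible erasure patterns: on the SR link, in every window of $T+1$ consecutive slots the erased slots form at most one run of consecutive slots of length $\le b_1$; on the RD link likewise with $b_2$. *)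

theory Defs
  imports Main
begin

(* A message sequence with k streams is
   a function x :: nat => nat => 'f, where x i t is the i-th message symbol x_i[t]
   (only indices i < k are relevant).  A point-to-point code is given by its
   encoder enc, mapping a message sequence to the packet sent at time t. *)

definition causal_code :: "((nat \<Rightarrow> nat \<Rightarrow> 'f) \<Rightarrow> nat \<Rightarrow> 'p) \<Rightarrow> bool" where
  "causal_code enc \<longleftrightarrow>
     (\<forall>x y t. (\<forall>i t'. t' \<le> t \<longrightarrow> x i t' = y i t') \<longrightarrow> enc x t = enc y t)"

definition admissible :: "nat \<Rightarrow> nat \<Rightarrow> nat set \<Rightarrow> bool" where
  "admissible b T E \<longleftrightarrow>
     (\<forall>w. E \<inter> {w..w+T} = {} \<or>
          (\<exists>a l. 1 \<le> l \<and> l \<le> b \<and> E \<inter> {w..w+T} = {a..<a+l}))"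

definition same_received :: "((nat \<Rightarrow> nat \<Rightarrow> 'f) \<Rightarrow> nat \<Rightarrow> 'p) \<Rightarrow> nat set \<Rightarrow> nat
     \<Rightarrow> (nat \<Rightarrow> nat \<Rightarrow> 'f) \<Rightarrow> (nat \<Rightarrow> nat \<Rightarrow> 'f) \<Rightarrow> bool" where
  "same_received enc E u x y \<longleftrightarrow> (\<forall>t'. t' \<le> u \<longrightarrow> t' \<notin> E \<longrightarrow> enc x t' = enc y t')"

(* Delay profile (d_1,...,d_k) (given as d :: nat => nat, d i = d_{i+1}, i < k):
   x_i[t] is determined by packets received at times \<le> t + d_i. *)
definition delay_profile ::
  "nat \<Rightarrow> nat \<Rightarrow> nat \<Rightarrow> ((nat \<Rightarrow> nat \<Rightarrow> 'f) \<Rightarrow> nat \<Rightarrow> 'p) \<Rightarrow> (nat \<Rightarrow> nat) \<Rightarrow> bool" where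
  "delay_profile k b T enc d \<longleftrightarrow>
     (\<forall>E. admissible b T E \<longrightarrow>
        (\<forall>x y t i. i < k \<longrightarrow> same_received enc E (t + d i) x y \<longrightarrow> x i t = y i t))"

definition mem :: "nat \<Rightarrow> (nat \<Rightarrow> nat \<Rightarrow> nat \<Rightarrow> nat \<Rightarrow> 'f::field) \<Rightarrow> (nat \<Rightarrow> nat \<Rightarrow> 'f)
     \<Rightarrow> nat \<Rightarrow> nat \<Rightarrow> 'f" where
  "mem k c s i t = (\<Sum>j<k. \<Sum>t'<t. c i j t t' * s j t')"

definition ext_delay_profile ::
  "nat \<Rightarrow> nat \<Rightarrow> nat \<Rightarrow> (nat \<Rightarrow> nat \<Rightarrow> nat \<Rightarrow> nat \<Rightarrow> 'f::field)
     \<Rightarrow> ((nat \<Rightarrow> nat \<Rightarrow> 'f) \<Rightarrow> nat \<Rightarrow> 'p) \<Rightarrow> (nat \<Rightarrow> nat) \<Rightarrow> bool" where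
  "ext_delay_profile k b T c enc d \<longleftrightarrow>
     (\<forall>E. admissible b T E \<longrightarrow>
        (\<forall>s s' t i. i < k \<longrightarrow> same_received enc E (t + d i) s s' \<longrightarrow>
            s i t + mem k c s i t = s' i t + mem k c s' i t))"

definition relay_seq :: "nat \<Rightarrow> (nat \<Rightarrow> nat \<Rightarrow> nat \<Rightarrow> nat \<Rightarrow> 'f::field) \<Rightarrow> (nat \<Rightarrow> nat)
     \<Rightarrow> (nat \<Rightarrow> nat \<Rightarrow> 'f) \<Rightarrow> nat \<Rightarrow> nat \<Rightarrow> 'f" where
  "relay_seq k c d s i t = (if t < d i then 0 else s i (t - d i) + mem k c s i (t - d i))"

end

theory Submission
  imports Defs
begin

(* The destination decodes r_i[t + t_i] = s_i[t] + m_i(t) by time t + t_i + t'_i <= t + T.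
   Since m_i(t) only involves source symbols sent before t, induction on t peels off the
   memory terms and recovers every s_i[t] with t <= tau from the packets received by tau + T. *)

lemma same_received_mono:
  assumes "same_received enc E u x y" and "u' \<le> u"
  shows "same_received enc E u' x y"
  using assms unfolding same_received_def by simp

lemma relay_seq_shift:
  "relay_seq k c d s i (t + d i) = s i t + mem k c s i t"
  unfolding relay_seq_def by simp

lemma mem_cong:
  assumes "\<And>j t'. j < k \<Longrightarrow> t' < t \<Longrightarrow> s j t' = s' j t'"
  shows "mem k c s i t = mem k c s' i t"
  unfolding mem_def using assms by (intro sum.cong refl) auto

lemma sources_eq_of_combined_eq:
  assumes combined: "\<And>j t. j < k \<Longrightarrow> t \<le> \<tau> \<Longrightarrow>
                       s j t + mem k c s j t = s' j t + mem k c s' j t"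
    and "j < k" and "t \<le> \<tau>"
  shows "s j t = s' j t"
  using assms(2,3)
proof (induction t arbitrary: j rule: less_induct)
  case (less t)
  have "mem k c s j t = mem k c s' j t"
    using less.IH less.prems by (intro mem_cong) auto
  with combined[OF less.prems] show ?case by simp
qed

lemma combined_eq_of_relay_received:
  assumes "delay_profile k b T enc d'" and "admissible b T E" and "j < k"
    and "same_received enc E (t + d j + d' j) (relay_seq k c d s) (relay_seq k c d s')"
  shows "s j t + mem k c s j t = s' j t + mem k c s' j t"
proof -
  have "relay_seq k c d s j (t + d j) = relay_seq k c d s' j (t + d j)"
    using assms unfolding delay_profile_def by blast
  then show ?thesis by (simp only: relay_seq_shift)
qed

(* The SR-link hypotheses are deliberately unused: they ensure the relay can form R[t] in
   time, but what the destination recovers depends only on R being relay_seq k c ts s. *)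
theorem mainTheorem12:
  fixes k b1 b2 T :: nat
    and c :: "nat \<Rightarrow> nat \<Rightarrow> nat \<Rightarrow> nat \<Rightarrow> 'f::field"
    and enc1 :: "(nat \<Rightarrow> nat \<Rightarrow> 'f) \<Rightarrow> nat \<Rightarrow> 'p1"
    and enc2 :: "(nat \<Rightarrow> nat \<Rightarrow> 'f) \<Rightarrow> nat \<Rightarrow> 'p2"
    and ts ts' :: "nat \<Rightarrow> nat"
  assumes "causal_code enc1"
    and "ext_delay_profile k b1 T c enc1 ts"
    and "causal_code enc2"
    and "delay_profile k b2 T enc2 ts'"
    and "\<forall>i<k. ts i + ts' i \<le> T"
  shows "\<forall>E2. admissible b2 T E2 \<longrightarrow>
           (\<forall>s s' \<tau> i. i < k \<longrightarrow>
              same_received enc2 E2 (\<tau> + T) (relay_seq k c ts s) (relay_seq k c ts s') \<longrightarrow>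
              s i \<tau> = s' i \<tau>)"
proof (intro allI impI)
  fix E2 s s' \<tau> i
  assume adm: "admissible b2 T E2" and "i < k"
    and received: "same_received enc2 E2 (\<tau> + T) (relay_seq k c ts s) (relay_seq k c ts s')"
  have "s j t + mem k c s j t = s' j t + mem k c s' j t" if "j < k" and "t \<le> \<tau>" for j t
  proof -
    have "t + ts j + ts' j \<le> \<tau> + T"
      using assms(5) that by fastforce
    then show ?thesis
      using combined_eq_of_relay_received[OF assms(4) adm \<open>j < k\<close>]
        same_received_mono[OF received] by blast
  qed
  then show "s i \<tau> = s' i \<tau>"
    using sources_eq_of_combined_eq \<open>i < k\<close> by blast
qed

end
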